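(* Let $\mathbb{K}$ be a field and $\alpha\in\mathbb{K}^*$. For $n$ even, $X_n(\alpha)$ is smooth. For $n$ odd and $\alpha\neq(-1)^{(n+1)/2}$, $X_n(\alpha)$ is smooth. For $n$ odd and $\alpha=(-1)^{(n+1)/2}$, $X_n(\alpha)$ has a unique singular point, namely $x_i=x'_i=0$ for odd $i$ and $x_i=x'_i=-(-1)^{(n+i-1)/2}$ for even $i$.
   Context: For $\alpha$ invertible and $n\ge1$, $X_n(\alpha)$ is the affine variety over $\mathbb{K}$ in variables $x_1,\dots,x_n,x'_1,\dots,x'_n$ defined by $x_1x'_1=1+\alpha x_2$, $x_ix'_i=1+x_{i-1}x_{i+1}$ for $2\le i\le n-1$, $x_nx'_n=1+x_{n-1}$ (for $n=1$: $x_1x'_1=1+\alpha$); $X_0(\alpha)$ is a point. *)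

theory Defs
  imports Main
begin

(* Points of X_n(beta) with coordinates in a field 'b.  A point is a pair (x, x')
   of functions nat => 'b, with coordinates indexed by 1..n and junk values
   forced to 0 outside {1..n}. *)

definition rhsX :: "'b::field \<Rightarrow> nat \<Rightarrow> (nat \<Rightarrow> 'b) \<Rightarrow> nat \<Rightarrow> 'b" where
  "rhsX \<beta> n x i =
     (if n = 1 then 1 + \<beta>
      else if i = 1 then 1 + \<beta> * x 2
      else if i < n then 1 + x (i - 1) * x (i + 1)
      else 1 + x (n - 1))"

definition Xpts :: "'b::field \<Rightarrow> nat \<Rightarrow> ((nat \<Rightarrow> 'b) \<times> (nat \<Rightarrow> 'b)) set" where
  "Xpts \<beta> n = {(x, x'). (\<forall>j. j \<notin> {1..n} \<longrightarrow> x j = 0 \<and> x' j = 0) \<and>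
                       (\<forall>i\<in>{1..n}. x i * x' i = rhsX \<beta> n x i)}"

(* Jacobian of f_i = x_i x'_i - rhsX_i, written out entrywise:
   dX = partial derivative of f_i w.r.t. x_j, dX' = w.r.t. x'_j. *)
definition dX :: "'b::field \<Rightarrow> nat \<Rightarrow> (nat \<Rightarrow> 'b) \<Rightarrow> (nat \<Rightarrow> 'b) \<Rightarrow> nat \<Rightarrow> nat \<Rightarrow> 'b" where
  "dX \<beta> n x x' i j =
     (if j = i then x' i else 0)
     - (if i = 1 \<and> 2 \<le> n \<and> j = 2 then \<beta> else 0)
     - (if 2 \<le> i \<and> i + 1 \<le> n \<and> j = i - 1 then x (i + 1) else 0)
     - (if 2 \<le> i \<and> i + 1 \<le> n \<and> j = i + 1 then x (i - 1) else 0)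
     - (if i = n \<and> 2 \<le> n \<and> j = n - 1 then 1 else 0)"

definition dX' :: "(nat \<Rightarrow> 'b::field) \<Rightarrow> nat \<Rightarrow> nat \<Rightarrow> 'b" where
  "dX' x i j = (if j = i then x i else 0)"

(* Jacobian criterion: a point of the (n equations, 2n variables) variety is singular
   iff the rows of the Jacobian are linearly dependent (rank < n). *)
definition singular_pt :: "'b::field \<Rightarrow> nat \<Rightarrow> (nat \<Rightarrow> 'b) \<times> (nat \<Rightarrow> 'b) \<Rightarrow> bool" where
  "singular_pt \<beta> n p \<longleftrightarrow> p \<in> Xpts \<beta> n \<and>
     (\<exists>c :: nat \<Rightarrow> 'b. (\<exists>i\<in>{1..n}. c i \<noteq> 0) \<and>
        (\<forall>j\<in>{1..n}. (\<Sum>i=1..n. c i * dX \<beta> n (fst p) (snd p) i j) = 0) \<and>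
        (\<forall>j\<in>{1..n}. (\<Sum>i=1..n. c i * dX' (fst p) i j) = 0))"

definition smoothX :: "'b::field \<Rightarrow> nat \<Rightarrow> bool" where
  "smoothX \<beta> n \<longleftrightarrow> (\<nexists>p. singular_pt \<beta> n p)"

definition special_pt :: "nat \<Rightarrow> (nat \<Rightarrow> 'b::field) \<times> (nat \<Rightarrow> 'b)" where
  "special_pt n =
     (let v = (\<lambda>i. if i \<in> {1..n} \<and> even i then - ((-1) ^ ((n + i - 1) div 2)) else 0) in (v, v))"

end

theory Submission imports Defs begin

text \<open>
  A point is singular iff the transposed Jacobian kills some nonzero vector c, i.e.
  c_j x_j = 0 and c_j x'_j = c_{j-1} x_{j-2} + c_{j+1} x_{j+2} for all j, where x_0 = \<alpha>
  and x_{n+1} = 1. Wherever c_j \<noteq> 0 we get x_j = 0, hence x_{j-1} x_{j+1} = -1; so both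
  neighbours of x_j are nonzero, which forces c_{j\<plusminus>1} = 0 and c_{j\<plusminus>2} \<noteq> 0. Thus the support
  of c is exactly the set of odd indices, and n is odd since otherwise c_{n+1} would have to
  be nonzero. Then x_j = x'_j = 0 for odd j, and the relations x_{j-1} x_{j+1} = -1 determine
  the even coordinates downwards from x_{n+1} = 1, ending with \<alpha> = x_0 = (-1)^((n+1)/2).
  Conversely, at the special point the alternating vector c_j = (-1)^((j-1)/2) on odd j lies
  in the kernel. The field embedding \<phi> is injective, so the condition on \<phi> \<alpha> is the
  condition on \<alpha>.
\<close>

lemma additive_minus:
  fixes \<phi> :: "'a::ab_group_add \<Rightarrow> 'b::ab_group_add"
  assumes "\<And>a b. \<phi> (a + b) = \<phi> a + \<phi> b"
  shows "\<phi> (- a) = - \<phi> a"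
proof -
  have "\<phi> 0 = 0" using assms[of 0 0] by simp
  then have "\<phi> a + \<phi> (- a) = 0" using assms[of a "- a"] by simp
  then show ?thesis by (simp add: eq_neg_iff_add_eq_0 add.commute)
qed

lemma ring_hom_minus_one_power:
  fixes \<phi> :: "'a::ring_1 \<Rightarrow> 'b::ring_1"
  assumes "\<phi> 1 = 1" "\<And>a b. \<phi> (a + b) = \<phi> a + \<phi> b" "\<And>a b. \<phi> (a * b) = \<phi> a * \<phi> b"
  shows "\<phi> ((-1) ^ k) = (-1) ^ k"
  by (induction k) (simp_all add: assms additive_minus[of \<phi>])

lemma field_hom_inj:
  fixes \<phi> :: "'a::field \<Rightarrow> 'b::ring_1"
  assumes "\<phi> 1 = 1" "\<And>a b. \<phi> (a + b) = \<phi> a + \<phi> b" "\<And>a b. \<phi> (a * b) = \<phi> a * \<phi> b"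
  shows "inj \<phi>"
proof (rule injI, rule ccontr)
  fix a b assume eq: "\<phi> a = \<phi> b" and "a \<noteq> b"
  then have "\<phi> ((a - b) * inverse (a - b)) = 1" using assms(1) by simp
  moreover have "\<phi> (a - b) = 0"
    using eq assms(2)[of a "- b"] additive_minus[of \<phi> b, OF assms(2)] by simp
  ultimately show False using assms(3) by simp
qed

lemma sum_eq_single:
  assumes "finite A" "\<And>i. i \<in> A \<Longrightarrow> i \<noteq> k \<Longrightarrow> f i = 0"
  shows "sum f A = (if k \<in> A then f k else 0)"
proof (cases "k \<in> A")
  case True
  then have "sum f A = f k + sum f (A - {k})" using assms(1) by (simp add: sum.remove)
  also have "sum f (A - {k}) = 0" using assms(2) by (intro sum.neutral) auto
  finally show ?thesis using True by simp
next
  case False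
  then show ?thesis using assms(2) by (auto intro: sum.neutral)
qed

lemma minus_one_power_diff:
  assumes "m \<le> h + 1"
  shows "(-1::'b::ring_1) ^ (h + 1 - m) = - ((-1) ^ (h + m))"
proof -
  have "even (h + 1 - m) \<longleftrightarrow> odd (h + m)" using assms by presburger
  then show ?thesis by (auto simp: minus_one_power_iff)
qed

text \<open>With the boundary values x_0 = \<beta> and x_{n+1} = 1 every defining equation reads
  x_i x'_i = 1 + x_{i-1} x_{i+1}, and every Jacobian column has the same shape.\<close>

definition ext_coord :: "'b::field \<Rightarrow> nat \<Rightarrow> (nat \<Rightarrow> 'b) \<Rightarrow> nat \<Rightarrow> 'b" where
  "ext_coord \<beta> n x k = (if k = 0 then \<beta> else if k = n + 1 then 1 else x k)"

definition ext_coeff :: "nat \<Rightarrow> (nat \<Rightarrow> 'b::field) \<Rightarrow> nat \<Rightarrow> 'b" where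
  "ext_coeff n c k = (if k \<in> {1..n} then c k else 0)"

lemma ext_coord_inside [simp]: "j \<in> {1..n} \<Longrightarrow> ext_coord \<beta> n x j = x j"
  by (simp add: ext_coord_def)

lemma ext_coeff_nonzero_imp_mem: "ext_coeff n c j \<noteq> 0 \<Longrightarrow> j \<in> {1..n}"
  by (auto simp: ext_coeff_def split: if_splits)

lemma rhsX_ext_coord:
  assumes "i \<in> {1..n}"
  shows "rhsX \<beta> n x i = 1 + ext_coord \<beta> n x (i - 1) * ext_coord \<beta> n x (i + 1)"
  using assms by (auto simp: rhsX_def ext_coord_def numeral_eq_Suc)

lemma sum_dX'_column:
  assumes "j \<in> {1..n}"
  shows "(\<Sum>i=1..n. c i * dX' x i j) = c j * x j"
  by (subst sum_eq_single[where k=j]) (use assms in \<open>auto simp: dX'_def\<close>)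

lemma sum_dX_column:
  fixes \<beta> :: "'b::field"
  assumes j: "j \<in> {1..n}"
  shows "(\<Sum>i=1..n. c i * dX \<beta> n x x' i j) =
     ext_coeff n c j * x' j - ext_coeff n c (j - 1) * ext_coord \<beta> n x (j - 2)
       - ext_coeff n c (j + 1) * ext_coord \<beta> n x (j + 2)"
proof -
  have S1: "(\<Sum>i=1..n. c i * (if j = i then x' i else 0)) = c j * x' j"
    by (subst sum_eq_single[where k=j]) (use j in auto)
  have S2: "(\<Sum>i=1..n. c i * (if i = 1 \<and> 2 \<le> n \<and> j = 2 then \<beta> else 0))
      = (if j = 2 \<and> 2 \<le> n then c 1 * \<beta> else 0)"
    by (subst sum_eq_single[where k=1]) (use j in auto)
  have S3: "(\<Sum>i=1..n. c i * (if 2 \<le> i \<and> i + 1 \<le> n \<and> j = i - 1 then x (i + 1) else 0))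
      = (if j + 2 \<le> n then c (j + 1) * x (j + 2) else 0)"
    by (subst sum_eq_single[where k="j+1"]) (use j in auto)
  have S4: "(\<Sum>i=1..n. c i * (if 2 \<le> i \<and> i + 1 \<le> n \<and> j = i + 1 then x (i - 1) else 0))
      = (if 3 \<le> j then c (j - 1) * x (j - 2) else 0)"
    by (subst sum_eq_single[where k="j-1"]) (use j in \<open>auto simp: numeral_eq_Suc\<close>)
  have S5: "(\<Sum>i=1..n. c i * (if i = n \<and> 2 \<le> n \<and> j = n - 1 then 1 else 0))
      = (if j + 1 = n then c n else 0)"
    by (subst sum_eq_single[where k=n]) (use j in auto)
  have "(\<Sum>i=1..n. c i * dX \<beta> n x x' i j) =
     (\<Sum>i=1..n. c i * (if j = i then x' i else 0))
     - (\<Sum>i=1..n. c i * (if i = 1 \<and> 2 \<le> n \<and> j = 2 then \<beta> else 0))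
     - (\<Sum>i=1..n. c i * (if 2 \<le> i \<and> i + 1 \<le> n \<and> j = i - 1 then x (i + 1) else 0))
     - (\<Sum>i=1..n. c i * (if 2 \<le> i \<and> i + 1 \<le> n \<and> j = i + 1 then x (i - 1) else 0))
     - (\<Sum>i=1..n. c i * (if i = n \<and> 2 \<le> n \<and> j = n - 1 then 1 else 0))"
    unfolding dX_def by (simp add: right_diff_distrib sum_subtractf)
  also have "\<dots> = ext_coeff n c j * x' j - ext_coeff n c (j - 1) * ext_coord \<beta> n x (j - 2)
       - ext_coeff n c (j + 1) * ext_coord \<beta> n x (j + 2)"
    unfolding S1 S2 S3 S4 S5 using j by (auto simp: ext_coeff_def ext_coord_def numeral_eq_Suc)
  finally show ?thesis .
qed

locale singular_witness =
  fixes \<beta> :: "'b::field" and n :: nat and x x' c :: "nat \<Rightarrow> 'b"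
  assumes on_X: "(x, x') \<in> Xpts \<beta> n"
    and coeff_nonzero: "\<exists>i\<in>{1..n}. c i \<noteq> 0"
    and kernel_dX: "\<And>j. j \<in> {1..n} \<Longrightarrow> (\<Sum>i=1..n. c i * dX \<beta> n x x' i j) = 0"
    and kernel_dX': "\<And>j. j \<in> {1..n} \<Longrightarrow> (\<Sum>i=1..n. c i * dX' x i j) = 0"
begin

abbreviation X where "X \<equiv> ext_coord \<beta> n x"
abbreviation C where "C \<equiv> ext_coeff n c"

lemma coord_outside: "j \<notin> {1..n} \<Longrightarrow> x j = 0 \<and> x' j = 0"
  using on_X unfolding Xpts_def by auto

lemma equation: "i \<in> {1..n} \<Longrightarrow> x i * x' i = 1 + X (i - 1) * X (i + 1)"
  using on_X rhsX_ext_coord unfolding Xpts_def by fastforce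

lemma coeff_times_coord: "C j * X j = 0"
  using kernel_dX' sum_dX'_column[of j n c x] ext_coeff_nonzero_imp_mem[of n c j]
  by (cases "j \<in> {1..n}") (auto simp: ext_coeff_def)

lemma column: "j \<in> {1..n} \<Longrightarrow> C j * x' j = C (j - 1) * X (j - 2) + C (j + 1) * X (j + 2)"
  using kernel_dX[of j] sum_dX_column[of j n c \<beta> x x'] by (simp add: algebra_simps)

lemma neighbours_nonzero:
  assumes "C j \<noteq> 0" shows "X (j - 1) \<noteq> 0 \<and> X (j + 1) \<noteq> 0"
proof -
  have j: "j \<in> {1..n}" using assms by (rule ext_coeff_nonzero_imp_mem)
  then have "x j = 0" using coeff_times_coord[of j] assms by simp
  then have "1 + X (j - 1) * X (j + 1) = 0" using equation[OF j] by simp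
  then show ?thesis by auto
qed

lemma neighbour_coeffs_zero: "C j \<noteq> 0 \<Longrightarrow> C (j - 1) = 0 \<and> C (j + 1) = 0"
  using neighbours_nonzero coeff_times_coord by (metis mult_eq_0_iff)

lemma coeff_step_up:
  assumes cj: "C j \<noteq> 0" and "j + 1 \<le> n"
  shows "C (j + 2) \<noteq> 0"
proof -
  have "j + 1 \<in> {1..n}" using assms by auto
  from column[OF this] have "C j * X (j - 1) + C (j + 2) * X (j + 3) = 0"
    using neighbour_coeffs_zero[OF cj] ext_coeff_nonzero_imp_mem[OF cj] by (simp add: numeral_eq_Suc)
  moreover have "C j * X (j - 1) \<noteq> 0" using cj neighbours_nonzero[OF cj] by simp
  ultimately show ?thesis by auto
qed

lemma coeff_step_down:
  assumes cj: "C j \<noteq> 0" and j2: "2 \<le> j"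
  shows "C (j - 2) \<noteq> 0"
proof -
  have j1: "j - 1 \<in> {1..n}" using j2 ext_coeff_nonzero_imp_mem[OF cj] by auto
  have idx: "j - 1 - 1 = j - 2" "j - 1 - 2 = j - 3" "j - 1 + 1 = j" "j - 1 + 2 = j + 1"
    using j2 by auto
  from column[OF j1] have "C (j - 2) * X (j - 3) + C j * X (j + 1) = 0"
    using neighbour_coeffs_zero[OF cj] unfolding idx by simp
  moreover have "C j * X (j + 1) \<noteq> 0" using cj neighbours_nonzero[OF cj] by simp
  ultimately show ?thesis by auto
qed

lemma coeff_support_odd: "C j \<noteq> 0 \<Longrightarrow> odd j \<and> C 1 \<noteq> 0"
proof (induction j rule: less_induct)
  case (less j)
  have "j \<ge> 1" using ext_coeff_nonzero_imp_mem[OF less.prems] by auto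
  show ?case
  proof (cases "j = 1")
    case True then show ?thesis using less.prems by simp
  next
    case False
    then have j2: "2 \<le> j" using \<open>j \<ge> 1\<close> by auto
    then have "odd (j - 2) \<and> C 1 \<noteq> 0" using less.IH[of "j - 2"] coeff_step_down[OF less.prems] by auto
    then show ?thesis using j2 by auto
  qed
qed

lemma coeff_odd_nonzero: "2 * m + 1 \<le> n \<Longrightarrow> C (2 * m + 1) \<noteq> 0"
proof (induction m)
  case 0
  obtain k where "k \<in> {1..n}" "c k \<noteq> 0" using coeff_nonzero by auto
  then show ?case using coeff_support_odd[of k] by (simp add: ext_coeff_def)
next
  case (Suc m)
  then show ?case using coeff_step_up[of "2 * m + 1"] by (simp add: algebra_simps)
qed

lemma odd_dim: "odd n"
proof (rule ccontr)
  assume "\<not> odd n"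
  moreover have "1 \<le> n" using coeff_nonzero by auto
  ultimately have "\<exists>m. n = 2 * m + 2" by presburger
  then obtain m where m: "n = 2 * m + 2" ..
  have "C (2 * m + 1 + 2) \<noteq> 0" using coeff_step_up coeff_odd_nonzero m by simp
  then show False using ext_coeff_nonzero_imp_mem m by fastforce
qed

lemma coeff_nonzero_iff: "j \<in> {1..n} \<Longrightarrow> C j \<noteq> 0 \<longleftrightarrow> odd j"
  using coeff_support_odd coeff_odd_nonzero by (metis atLeastAtMost_iff oddE)

lemma coord_odd_zero:
  assumes j: "j \<in> {1..n}" and "odd j"
  shows "x j = 0 \<and> x' j = 0"
proof -
  have cj: "C j \<noteq> 0" using coeff_nonzero_iff j assms(2) by blast
  have "C (j - 1) = 0 \<and> C (j + 1) = 0" using neighbour_coeffs_zero[OF cj] .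
  then have "C j * x' j = 0" using column[OF j] by simp
  then show ?thesis using coeff_times_coord[of j] cj j by simp
qed

lemma ext_coord_around_odd: "odd j \<Longrightarrow> j \<le> n \<Longrightarrow> X (j - 1) * X (j + 1) = -1"
  using equation[of j] coord_odd_zero[of j] odd_pos[of j]
  by (simp add: eq_neg_iff_add_eq_0 add.commute)

lemma ext_coord_even:
  assumes n: "n = 2 * h + 1"
  shows "d \<le> h + 1 \<Longrightarrow> X (2 * (h + 1 - d)) = (-1) ^ d"
proof (induction d)
  case 0 then show ?case using n by (simp add: ext_coord_def)
next
  case (Suc d)
  define j where "j = 2 * (h - d) + 1"
  have j: "odd j" "j \<le> n" "j - 1 = 2 * (h + 1 - Suc d)" "j + 1 = 2 * (h + 1 - d)"
    using n Suc.prems by (auto simp: j_def)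
  have "X (2 * (h + 1 - Suc d)) * (-1) ^ d = -1"
    using ext_coord_around_odd[of j] Suc j by simp
  then show ?case by (auto simp: minus_one_power_iff split: if_splits)
qed


lemma beta_eq: "\<beta> = (-1) ^ ((n + 1) div 2)"
proof -
  obtain h where n: "n = 2 * h + 1" using odd_dim by (metis oddE)
  show ?thesis using ext_coord_even[OF n, of "h + 1"] n by (simp add: ext_coord_def)
qed

lemma coord_even:
  assumes i: "i \<in> {1..n}" and "even i"
  shows "x i = - ((-1) ^ ((n + i - 1) div 2)) \<and> x' i = x i"
proof -
  obtain h where n: "n = 2 * h + 1" using odd_dim by (metis oddE)
  obtain m where m: "i = 2 * m" using \<open>even i\<close> by blast
  have mh: "1 \<le> m" "m \<le> h" using i m n by auto
  have "x i = (-1) ^ (h + 1 - m)"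
    using ext_coord_even[OF n, of "h + 1 - m"] mh i m by (simp add: Suc_diff_le)
  also have "\<dots> = - ((-1) ^ ((n + i - 1) div 2))"
    using minus_one_power_diff[of m h] mh n m by simp
  finally have xi: "x i = - ((-1) ^ ((n + i - 1) div 2))" .
  have "i - 1 \<in> {1..n}" "i + 1 \<in> {1..n}" using i n mh m by auto
  then have "x i * x' i = 1" using equation[OF i] coord_odd_zero \<open>even i\<close> by simp
  moreover have "x i * x i = 1" using xi by (simp add: minus_one_power_iff)
  ultimately show ?thesis using xi by (metis mult_left_cancel zero_neq_one mult_zero_left)
qed

lemma point_eq_special: "(x, x') = special_pt n"
  using coord_outside coord_odd_zero coord_even
  by (auto simp: special_pt_def Let_def fun_eq_iff)

end

lemma singular_pt_imp_special:
  assumes "singular_pt \<beta> n p"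
  shows "odd n \<and> \<beta> = (-1) ^ ((n + 1) div 2) \<and> p = special_pt n"
proof -
  obtain c where "p \<in> Xpts \<beta> n" "\<exists>i\<in>{1..n}. c i \<noteq> 0"
    "\<forall>j\<in>{1..n}. (\<Sum>i=1..n. c i * dX \<beta> n (fst p) (snd p) i j) = 0"
    "\<forall>j\<in>{1..n}. (\<Sum>i=1..n. c i * dX' (fst p) i j) = 0"
    using assms unfolding singular_pt_def by blast
  then interpret singular_witness \<beta> n "fst p" "snd p" c
    by unfold_locales auto
  show ?thesis using odd_dim beta_eq point_eq_special by simp
qed

lemma fst_special_pt:
  "fst (special_pt n) i = (if i \<in> {1..n} \<and> even i then - ((-1) ^ ((n + i - 1) div 2)) else 0)"
  by (simp add: special_pt_def Let_def)

lemma snd_special_pt: "snd (special_pt n) = fst (special_pt n)"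
  by (simp add: special_pt_def Let_def)

lemma ext_coord_special_even:
  fixes \<beta> :: "'b::field"
  assumes n: "n = 2 * h + 1" and \<beta>: "\<beta> = (-1) ^ (h + 1)" and m: "m \<le> h + 1"
  shows "ext_coord \<beta> n (fst (special_pt n)) (2 * m) = (-1) ^ (h + 1 - m)"
proof -
  consider "m = 0" | "m = h + 1" | "1 \<le> m" "m \<le> h" using m by linarith
  then show ?thesis
  proof cases
    case 3
    then have "ext_coord \<beta> n (fst (special_pt n)) (2 * m) = - ((-1) ^ (h + m))"
      using n by (simp add: ext_coord_def fst_special_pt)
    then show ?thesis by (metis minus_one_power_diff[OF m])
  qed (use n \<beta> in \<open>simp_all add: ext_coord_def\<close>)
qed

lemma special_pt_in_Xpts:
  fixes \<beta> :: "'b::field"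
  assumes n: "n = 2 * h + 1" and \<beta>: "\<beta> = (-1) ^ (h + 1)"
  shows "special_pt n \<in> Xpts \<beta> n"
proof -
  define v :: "nat \<Rightarrow> 'b" where "v = fst (special_pt n)"
  have "v i * v i = rhsX \<beta> n v i" if i: "i \<in> {1..n}" for i
  proof (cases "even i")
    case True
    then have "i - 1 \<in> {1..n}" "odd (i - 1)" using i by (auto elim: evenE)
    then have "ext_coord \<beta> n v (i - 1) = 0" by (simp add: v_def fst_special_pt)
    moreover have "v i * v i = 1" using True i by (simp add: v_def fst_special_pt minus_one_power_iff)
    ultimately show ?thesis using rhsX_ext_coord[OF i, of \<beta> v] by simp
  next
    case False
    then obtain m where m: "i = 2 * m + 1" by (metis oddE)
    have mh: "m \<le> h" using i m n by auto
    have "ext_coord \<beta> n v (i - 1) * ext_coord \<beta> n v (i + 1)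
        = (-1) ^ (h + 1 - m) * (-1) ^ (h + 1 - (m + 1))"
      using ext_coord_special_even[OF n \<beta>, of m] ext_coord_special_even[OF n \<beta>, of "m + 1"] mh m
      by (simp add: v_def)
    also have "\<dots> = -1" using mh by (simp add: Suc_diff_le)
    finally show ?thesis using rhsX_ext_coord[OF i, of \<beta> v] False by (simp add: v_def fst_special_pt)
  qed
  then show ?thesis
    unfolding Xpts_def by (auto simp: v_def snd_special_pt fst_special_pt prod_eq_iff)
qed

definition alternating_coeff :: "nat \<Rightarrow> 'b::ring_1" where
  "alternating_coeff j = (if odd j then (-1) ^ ((j - 1) div 2) else 0)"

lemma special_pt_kernel_dX:
  fixes \<beta> :: "'b::field"
  assumes n: "n = 2 * h + 1" and \<beta>: "\<beta> = (-1) ^ (h + 1)" and j: "j \<in> {1..n}"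
  shows "(\<Sum>i=1..n. alternating_coeff i * dX \<beta> n (fst (special_pt n)) (snd (special_pt n)) i j) = 0"
proof -
  define v :: "nat \<Rightarrow> 'b" where "v = fst (special_pt n)"
  define X where "X = ext_coord \<beta> n v"
  have C: "ext_coeff n alternating_coeff k = (if k \<in> {1..n} \<and> odd k then (-1) ^ ((k - 1) div 2) else 0)"
    for k by (auto simp: ext_coeff_def alternating_coeff_def)
  have "ext_coeff n alternating_coeff j * v j - ext_coeff n alternating_coeff (j - 1) * X (j - 2)
      - ext_coeff n alternating_coeff (j + 1) * X (j + 2) = 0"
  proof (cases "even j")
    case False
    then show ?thesis unfolding C by (auto simp: v_def fst_special_pt)
  next
    case True
    then obtain m where m: "j = 2 * m" by blast
    have mh: "1 \<le> m" "m \<le> h" using j m n by auto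
    have idx: "j - 2 = 2 * (m - 1)" "j + 2 = 2 * (m + 1)" "(j - 1 - 1) div 2 = m - 1"
      "(j + 1 - 1) div 2 = m" using m mh by auto
    have odd_nb: "j - 1 \<in> {1..n}" "odd (j - 1)" "j + 1 \<in> {1..n}" "odd (j + 1)"
      using j m mh n by auto
    have "ext_coeff n alternating_coeff j * v j - ext_coeff n alternating_coeff (j - 1) * X (j - 2)
          - ext_coeff n alternating_coeff (j + 1) * X (j + 2)
        = - ((-1) ^ (m - 1) * (-1) ^ (h + 1 - (m - 1))) - (-1) ^ m * (-1) ^ (h + 1 - (m + 1))"
      unfolding C idx X_def v_def using odd_nb True mh
        ext_coord_special_even[OF n \<beta>, of "m - 1"] ext_coord_special_even[OF n \<beta>, of "m + 1"]
      by simp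
    also have "\<dots> = - ((-1) ^ (h + 1)) - (-1) ^ h"
      unfolding power_add[symmetric] using mh by simp
    also have "\<dots> = 0" by simp
    finally show ?thesis .
  qed
  then show ?thesis
    using sum_dX_column[OF j, of alternating_coeff \<beta> v v] by (simp add: X_def v_def snd_special_pt)
qed

lemma special_pt_singular:
  fixes \<beta> :: "'b::field"
  assumes "odd n" and \<beta>: "\<beta> = (-1) ^ ((n + 1) div 2)"
  shows "singular_pt \<beta> n (special_pt n)"
proof -
  obtain h where n: "n = 2 * h + 1" using \<open>odd n\<close> by (metis oddE)
  then have \<beta>': "\<beta> = (-1) ^ (h + 1)" using \<beta> by simp
  have coeff_coord: "alternating_coeff j * fst (special_pt n) j = (0::'b)" for j
    by (simp add: alternating_coeff_def fst_special_pt)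
  have "(\<Sum>i=1..n. alternating_coeff i * dX' (fst (special_pt n)) i j) = (0::'b)" if "j \<in> {1..n}" for j
    using sum_dX'_column[OF that, of alternating_coeff "fst (special_pt n) :: nat \<Rightarrow> 'b"]
    by (simp add: coeff_coord)
  moreover have "alternating_coeff 1 \<noteq> (0::'b)" by (simp add: alternating_coeff_def)
  moreover have "(1::nat) \<in> {1..n}" using n by simp
  ultimately show ?thesis
    unfolding singular_pt_def
    using special_pt_in_Xpts[OF n \<beta>'] special_pt_kernel_dX[OF n \<beta>'] by blast
qed

theorem mainTheorem14:
  fixes \<alpha> :: "'a::field" and \<phi> :: "'a \<Rightarrow> 'b::field" and n :: nat
  assumes "\<alpha> \<noteq> 0"
    and "\<phi> 1 = 1" and "\<And>a b. \<phi> (a + b) = \<phi> a + \<phi> b" and "\<And>a b. \<phi> (a * b) = \<phi> a * \<phi> b"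
  shows "(even n \<longrightarrow> smoothX (\<phi> \<alpha>) n)
       \<and> (odd n \<and> \<alpha> \<noteq> (-1) ^ ((n + 1) div 2) \<longrightarrow> smoothX (\<phi> \<alpha>) n)
       \<and> (odd n \<and> \<alpha> = (-1) ^ ((n + 1) div 2) \<longrightarrow>
            {p. singular_pt (\<phi> \<alpha>) n p} = {special_pt n})"
proof -
  have \<phi>_iff: "\<phi> \<alpha> = (-1) ^ k \<longleftrightarrow> \<alpha> = (-1) ^ k" for k
  proof -
    have "\<phi> \<alpha> = (-1) ^ k \<longleftrightarrow> \<phi> \<alpha> = \<phi> ((-1) ^ k)"
      by (simp only: ring_hom_minus_one_power[of \<phi>, OF assms(2-4)])
    also have "\<dots> \<longleftrightarrow> \<alpha> = (-1) ^ k" by (rule inj_eq[OF field_hom_inj[of \<phi>, OF assms(2-4)]])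
    finally show ?thesis .
  qed
  have "singular_pt (\<phi> \<alpha>) n p \<longleftrightarrow> odd n \<and> \<alpha> = (-1) ^ ((n + 1) div 2) \<and> p = special_pt n" for p
    using singular_pt_imp_special[of "\<phi> \<alpha>" n p] special_pt_singular[of n "\<phi> \<alpha>"] \<phi>_iff by blast
  then show ?thesis unfolding smoothX_def by blast
qed

end
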